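(* Let $d$ and $n\le d$ be positive integers and let $\mathcal{H}=\{H_1,\ldots,H_k\}$ be a collection of subsets of $[d]=\{1,\ldots,d\}$ such that the intersection of any three of them is empty. Then the following collection $\mathcal{C}$ of subsets of $[d]$ is the set of circuits of a matroid on $[d]$: (1) every $(n-1)$-element subset of $[d]$ contained in $H_i\cap H_j$ for some two distinct members $H_i,H_j$ of $\mathcal{H}$ ("Type 1"); (2) every $n$-element subset of some $H_i\in\mathcal{H}$ that does not contain a subset of Type 1 ("Type 2"); (3) every $(n+1)$-element subset of $[d]$ that contains no subset of Type 1 or of Type 2 ("Type 3"). *)

theory Defs
  imports Main
begin

definition matroid_circuits :: "'a set \<Rightarrow> 'a set set \<Rightarrow> bool" where
  "matroid_circuits E \<C> \<longleftrightarrow>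
     (\<forall>C\<in>\<C>. C \<subseteq> E) \<and>
     {} \<notin> \<C> \<and>
     (\<forall>C1\<in>\<C>. \<forall>C2\<in>\<C>. C1 \<subseteq> C2 \<longrightarrow> C1 = C2) \<and>
     (\<forall>C1\<in>\<C>. \<forall>C2\<in>\<C>. \<forall>e. C1 \<noteq> C2 \<and> e \<in> C1 \<inter> C2 \<longrightarrow>
        (\<exists>C3\<in>\<C>. C3 \<subseteq> (C1 \<union> C2) - {e}))"

definition type1 :: "nat \<Rightarrow> nat \<Rightarrow> nat set set \<Rightarrow> nat set set" where
  "type1 d n \<H> = {S. S \<subseteq> {1..d} \<and> card S = n - 1 \<and>
      (\<exists>Hi\<in>\<H>. \<exists>Hj\<in>\<H>. Hi \<noteq> Hj \<and> S \<subseteq> Hi \<inter> Hj)}"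

definition type2 :: "nat \<Rightarrow> nat \<Rightarrow> nat set set \<Rightarrow> nat set set" where
  "type2 d n \<H> = {S. S \<subseteq> {1..d} \<and> card S = n \<and> (\<exists>H\<in>\<H>. S \<subseteq> H) \<and>
      \<not> (\<exists>T\<in>type1 d n \<H>. T \<subseteq> S)}"

definition type3 :: "nat \<Rightarrow> nat \<Rightarrow> nat set set \<Rightarrow> nat set set" where
  "type3 d n \<H> = {S. S \<subseteq> {1..d} \<and> card S = n + 1 \<and>
      \<not> (\<exists>T\<in>type1 d n \<H> \<union> type2 d n \<H>. T \<subseteq> S)}"

end

theory Submission
  imports Defs
begin

(* Candidate circuits have n - 1, n or n + 1 elements, and the "contains no smaller
   circuit" clauses separating the types make them pairwise incomparable.
   For elimination let U = (C1 \<union> C2) - {e}. If U has at least n + 1 elements it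
   contains a circuit by counting alone. Otherwise C1 and C2 are proper subsets of a
   set of at most n + 1 elements, so both have type 1 or 2 and lie in members of \<H>.
   Since e lies in both and no point lies in three members, C1 \<union> C2 lies in a single
   member (in a single pairwise intersection if both have type 1), where U is large
   enough to contain a circuit. Two type-2 circuits in different members cannot occur:
   their intersection would have n - 1 elements, i.e. be a type-1 set inside a type-2
   circuit. *)

abbreviation circuit_family :: "nat \<Rightarrow> nat \<Rightarrow> nat set set \<Rightarrow> nat set set" where
  "circuit_family d n \<H> \<equiv> type1 d n \<H> \<union> type2 d n \<H> \<union> type3 d n \<H>"

definition triple_free :: "'a set set \<Rightarrow> bool" where
  "triple_free \<H> \<longleftrightarrow>
     (\<forall>A\<in>\<H>. \<forall>B\<in>\<H>. \<forall>C\<in>\<H>. A \<noteq> B \<and> A \<noteq> C \<and> B \<noteq> C \<longrightarrow> A \<inter> B \<inter> C = {})"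

lemma triple_free_common_point:
  assumes "triple_free \<H>" "A \<in> \<H>" "B \<in> \<H>" "C \<in> \<H>" "A \<noteq> B" "e \<in> A \<inter> B \<inter> C"
  shows "C = A \<or> C = B"
  using assms unfolding triple_free_def by blast

lemma pair_intersection_union_subset_member:
  assumes "triple_free \<H>" "Hi \<in> \<H>" "Hj \<in> \<H>" "Hi \<noteq> Hj" "H \<in> \<H>"
    and "X \<subseteq> Hi \<inter> Hj" "Y \<subseteq> H" "e \<in> X \<inter> Y"
  shows "X \<union> Y \<subseteq> H"
  using triple_free_common_point[OF assms(1-3,5,4), of e] assms(6-8) by blast

lemma pair_intersections_sharing_point_coincide:
  assumes "triple_free \<H>" "Hi \<in> \<H>" "Hj \<in> \<H>" "Hi \<noteq> Hj" "Hk \<in> \<H>" "Hl \<in> \<H>" "Hk \<noteq> Hl"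
    and "e \<in> Hi \<inter> Hj \<inter> Hk \<inter> Hl"
  shows "Hk \<inter> Hl = Hi \<inter> Hj"
  using triple_free_common_point[OF assms(1-3,5,4), of e] triple_free_common_point[OF assms(1-3,6,4), of e]
    assms(7,8) by blast

lemma circuit_family_subset_ground: "C \<in> circuit_family d n \<H> \<Longrightarrow> C \<subseteq> {1..d}"
  unfolding type1_def type2_def type3_def by auto

lemma circuit_family_finite: "C \<in> circuit_family d n \<H> \<Longrightarrow> finite C"
  by (rule finite_subset[OF circuit_family_subset_ground]) simp_all

lemma circuit_family_card_ge: "C \<in> circuit_family d n \<H> \<Longrightarrow> n - 1 \<le> card C"
  unfolding type1_def type2_def type3_def by auto

lemma empty_not_in_circuit_family:
  assumes "1 \<le> n" "2 \<le> n \<or> (\<forall>A\<in>\<H>. \<forall>B\<in>\<H>. A = B)"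
  shows "{} \<notin> circuit_family d n \<H>"
  using assms unfolding type1_def type2_def type3_def by auto

lemma large_set_contains_circuit:
  assumes "X \<subseteq> {1..d}" "n + 1 \<le> card X"
  shows "\<exists>C\<in>circuit_family d n \<H>. C \<subseteq> X"
proof -
  obtain Y where Y: "Y \<subseteq> X" "card Y = n + 1"
    using obtain_subset_with_card_n[OF assms(2)] by metis
  show ?thesis
  proof (cases "\<exists>T\<in>type1 d n \<H> \<union> type2 d n \<H>. T \<subseteq> Y")
    case False
    then have "Y \<in> type3 d n \<H>" using Y assms(1) unfolding type3_def by blast
    then show ?thesis using Y by blast
  qed (use Y in blast)
qed

lemma large_subset_of_member_contains_circuit:
  assumes "X \<subseteq> {1..d}" "X \<subseteq> H" "H \<in> \<H>" "n \<le> card X"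
  shows "\<exists>C\<in>circuit_family d n \<H>. C \<subseteq> X"
proof -
  obtain Y where Y: "Y \<subseteq> X" "card Y = n"
    using obtain_subset_with_card_n[OF assms(4)] by metis
  show ?thesis
  proof (cases "\<exists>T\<in>type1 d n \<H>. T \<subseteq> Y")
    case False
    then have "Y \<in> type2 d n \<H>" using Y assms(1-3) unfolding type2_def by blast
    then show ?thesis using Y by blast
  qed (use Y in blast)
qed

lemma large_subset_of_pair_intersection_contains_circuit:
  assumes "X \<subseteq> {1..d}" "X \<subseteq> Hi \<inter> Hj" "Hi \<in> \<H>" "Hj \<in> \<H>" "Hi \<noteq> Hj" "n - 1 \<le> card X"
  shows "\<exists>C\<in>circuit_family d n \<H>. C \<subseteq> X"
proof -
  obtain Y where Y: "Y \<subseteq> X" "card Y = n - 1"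
    using obtain_subset_with_card_n[OF assms(6)] by metis
  then have "Y \<in> type1 d n \<H>" using assms(1-5) unfolding type1_def by blast
  then show ?thesis using Y by blast
qed

lemma circuit_family_card_le_of_subset:
  assumes C1: "C1 \<in> circuit_family d n \<H>" and C2: "C2 \<in> circuit_family d n \<H>"
    and "C1 \<subseteq> C2"
  shows "card C2 \<le> card C1"
  using C2
proof (elim UnE)
  assume "C2 \<in> type1 d n \<H>"
  then show ?thesis using circuit_family_card_ge[OF C1] unfolding type1_def by simp
next
  assume C2': "C2 \<in> type2 d n \<H>"
  then have "C1 \<notin> type1 d n \<H>" using \<open>C1 \<subseteq> C2\<close> unfolding type2_def by blast
  then show ?thesis using C1 C2' unfolding type2_def type3_def by auto
next
  assume C2': "C2 \<in> type3 d n \<H>"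
  then have "C1 \<in> type3 d n \<H>" using C1 \<open>C1 \<subseteq> C2\<close> unfolding type3_def by blast
  then show ?thesis using C2' unfolding type3_def by simp
qed

lemma circuit_family_antichain:
  assumes "C1 \<in> circuit_family d n \<H>" "C2 \<in> circuit_family d n \<H>" "C1 \<subseteq> C2"
  shows "C1 = C2"
  using card_subset_eq[OF circuit_family_finite[OF assms(2)] assms(3)]
    circuit_family_card_le_of_subset[OF assms] card_mono[OF circuit_family_finite[OF assms(2)] assms(3)]
  by simp

lemma card_Un_ge_of_type2_in_distinct_members:
  assumes "C1 \<in> type2 d n \<H>" "C2 \<in> type2 d n \<H>"
    and "C1 \<subseteq> Ha" "C2 \<subseteq> Hb" "Ha \<in> \<H>" "Hb \<in> \<H>" "Ha \<noteq> Hb"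
  shows "n + 2 \<le> card (C1 \<union> C2)"
proof (rule ccontr)
  assume small: "\<not> n + 2 \<le> card (C1 \<union> C2)"
  have fin: "finite C1" "finite C2"
    using circuit_family_finite[OF UnI1, OF UnI2] assms(1,2) by blast+
  have card: "card C1 = n" "card C2 = n" using assms(1,2) unfolding type2_def by auto
  have "card (C1 \<union> C2) + card (C1 \<inter> C2) = card C1 + card C2"
    using card_Un_Int[OF fin] by simp
  then have "n - 1 \<le> card (C1 \<inter> C2)" using small card by linarith
  then obtain Y where Y: "Y \<subseteq> C1 \<inter> C2" "card Y = n - 1"
    using obtain_subset_with_card_n by metis
  have "C1 \<subseteq> {1..d}" using assms(1) unfolding type2_def by blast
  then have "Y \<subseteq> {1..d}" "Y \<subseteq> Ha \<inter> Hb" using Y(1) assms(3,4) by blast+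
  then have "Y \<in> type1 d n \<H>" using Y(2) assms(5-7) unfolding type1_def by blast
  then show False using Y assms(1) unfolding type2_def by blast
qed

lemma type2_small_union_in_member:
  assumes "triple_free \<H>"
    and C: "C \<in> type2 d n \<H>" "C \<subseteq> H" "H \<in> \<H>"
    and C': "C' \<in> type1 d n \<H> \<union> type2 d n \<H>"
    and "e \<in> C \<inter> C'" "card (C \<union> C') \<le> n + 1"
  shows "C \<union> C' \<subseteq> H"
  using C'
proof (elim UnE)
  assume "C' \<in> type1 d n \<H>"
  then obtain Hi Hj where ij: "Hi \<in> \<H>" "Hj \<in> \<H>" "Hi \<noteq> Hj" "C' \<subseteq> Hi \<inter> Hj"
    unfolding type1_def by blast
  have "C' \<union> C \<subseteq> H"
    using pair_intersection_union_subset_member[OF assms(1) ij(1-3) C(3) ij(4) C(2)]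
      \<open>e \<in> C \<inter> C'\<close> by blast
  then show ?thesis by blast
next
  assume C'2: "C' \<in> type2 d n \<H>"
  then obtain H' where H': "H' \<in> \<H>" "C' \<subseteq> H'" unfolding type2_def by blast
  have "H' = H"
  proof (rule ccontr)
    assume "H' \<noteq> H"
    then have "n + 2 \<le> card (C \<union> C')"
      using card_Un_ge_of_type2_in_distinct_members[OF C(1) C'2 C(2) H'(2) C(3) H'(1)]
      by simp
    then show False using \<open>card (C \<union> C') \<le> n + 1\<close> by linarith
  qed
  then show ?thesis using C(2) H'(2) by blast
qed

lemma circuit_family_elimination:
  assumes "triple_free \<H>"
    and C1: "C1 \<in> circuit_family d n \<H>" and C2: "C2 \<in> circuit_family d n \<H>"
    and "C1 \<noteq> C2" "e \<in> C1 \<inter> C2"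
  shows "\<exists>C3\<in>circuit_family d n \<H>. C3 \<subseteq> (C1 \<union> C2) - {e}"
proof -
  define U where "U = (C1 \<union> C2) - {e}"
  have fin: "finite (C1 \<union> C2)" using circuit_family_finite[OF C1] circuit_family_finite[OF C2] by simp
  have U_ground: "U \<subseteq> {1..d}"
    using circuit_family_subset_ground[OF C1] circuit_family_subset_ground[OF C2] unfolding U_def by blast
  have "C1 \<subset> C1 \<union> C2" "C2 \<subset> C1 \<union> C2"
    using circuit_family_antichain[OF C1 C2] circuit_family_antichain[OF C2 C1] \<open>C1 \<noteq> C2\<close> by blast+
  then have proper: "card C1 < card (C1 \<union> C2)" "card C2 < card (C1 \<union> C2)"
    using psubset_card_mono[OF fin] by blast+
  moreover have card_U: "card U = card (C1 \<union> C2) - 1"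
    using \<open>e \<in> C1 \<inter> C2\<close> fin unfolding U_def by (simp add: card_Diff_singleton)
  ultimately have U_large: "card C1 \<le> card U" "card C2 \<le> card U" by linarith+
  have "\<exists>C3\<in>circuit_family d n \<H>. C3 \<subseteq> U"
  proof (cases "n + 1 \<le> card U")
    case True
    then show ?thesis using large_set_contains_circuit[OF U_ground] by blast
  next
    case False
    then have small: "card (C1 \<union> C2) \<le> n + 1" using card_U by linarith
    have not_type3: "C1 \<notin> type3 d n \<H>" "C2 \<notin> type3 d n \<H>"
      using small proper unfolding type3_def by auto
    show ?thesis
    proof (cases "C1 \<in> type1 d n \<H> \<and> C2 \<in> type1 d n \<H>")
      case True
      then obtain Hi Hj Hk Hl where ij: "Hi \<in> \<H>" "Hj \<in> \<H>" "Hi \<noteq> Hj" "C1 \<subseteq> Hi \<inter> Hj"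
        and kl: "Hk \<in> \<H>" "Hl \<in> \<H>" "Hk \<noteq> Hl" "C2 \<subseteq> Hk \<inter> Hl"
        unfolding type1_def by blast
      have "Hk \<inter> Hl = Hi \<inter> Hj"
        using pair_intersections_sharing_point_coincide[OF \<open>triple_free \<H>\<close> ij(1-3) kl(1-3), of e]
          ij(4) kl(4) \<open>e \<in> C1 \<inter> C2\<close> by blast
      then have "U \<subseteq> Hi \<inter> Hj" using ij(4) kl(4) unfolding U_def by blast
      moreover have "n - 1 \<le> card U" using U_large True unfolding type1_def by simp
      ultimately show ?thesis
        using large_subset_of_pair_intersection_contains_circuit[OF U_ground _ ij(1-3)] by blast
    next
      case False
      then obtain C C' where "C \<in> {C1, C2}" and CC': "C \<union> C' = C1 \<union> C2"
        and small_CC': "e \<in> C \<inter> C'" "C \<in> type2 d n \<H>" "C' \<in> type1 d n \<H> \<union> type2 d n \<H>"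
        using C1 C2 not_type3 \<open>e \<in> C1 \<inter> C2\<close> by blast
      obtain H where H: "C \<subseteq> H" "H \<in> \<H>"
        using \<open>C \<in> type2 d n \<H>\<close> unfolding type2_def by blast
      have "C \<union> C' \<subseteq> H"
        using type2_small_union_in_member[OF assms(1) small_CC'(2) H small_CC'(3,1)] small CC' by simp
      then have "U \<subseteq> H" using CC' unfolding U_def by blast
      moreover have "n \<le> card U"
        using \<open>C \<in> {C1, C2}\<close> \<open>C \<in> type2 d n \<H>\<close> U_large
        unfolding type2_def by auto
      ultimately show ?thesis
        using large_subset_of_member_contains_circuit[OF U_ground _ \<open>H \<in> \<H>\<close>] by blast
    qed
  qed
  then show ?thesis unfolding U_def .
qed

theorem theorem3p1:
  fixes d n :: nat and \<H> :: "nat set set"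
  assumes "1 \<le> n" and "n \<le> d"
    and "finite \<H>" and "\<forall>H\<in>\<H>. H \<subseteq> {1..d}"
    and "\<forall>A\<in>\<H>. \<forall>B\<in>\<H>. \<forall>C\<in>\<H>. A \<noteq> B \<and> A \<noteq> C \<and> B \<noteq> C \<longrightarrow> A \<inter> B \<inter> C = {}"
    and "2 \<le> n \<or> (\<forall>A\<in>\<H>. \<forall>B\<in>\<H>. A = B)"
  shows "matroid_circuits {1..d} (type1 d n \<H> \<union> type2 d n \<H> \<union> type3 d n \<H>)"
proof -
  have "triple_free \<H>" using assms(5) unfolding triple_free_def .
  show ?thesis
    unfolding matroid_circuits_def
  proof (intro conjI ballI allI impI)
    fix C assume "C \<in> circuit_family d n \<H>"
    then show "C \<subseteq> {1..d}" by (rule circuit_family_subset_ground)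
  next
    show "{} \<notin> circuit_family d n \<H>"
      using empty_not_in_circuit_family[OF assms(1,6)] .
  next
    fix C1 C2 assume "C1 \<in> circuit_family d n \<H>" "C2 \<in> circuit_family d n \<H>" "C1 \<subseteq> C2"
    then show "C1 = C2" by (rule circuit_family_antichain)
  next
    fix C1 C2 e
    assume "C1 \<in> circuit_family d n \<H>" "C2 \<in> circuit_family d n \<H>"
      and "C1 \<noteq> C2 \<and> e \<in> C1 \<inter> C2"
    then show "\<exists>C3\<in>circuit_family d n \<H>. C3 \<subseteq> C1 \<union> C2 - {e}"
      by (elim conjE) (rule circuit_family_elimination[OF \<open>triple_free \<H>\<close>])
  qed
qed

end
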